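(* Let $t=\alpha^\mu\beta^\nu$ with $\mu\in\mathbb{Z}_{\ge0}^m$ and $\nu\in\{0,\dots,m\}^n$ non-increasing. If $t$ has a sorted syl-representation, then $t$ has a sorted-flushed syl-representation.
   Context: For $M\in\{0,1\}^{m\times n}$: $rs(M)=(\sum_j M_{ij})_i$; $cs(M)=(\sum_i M_{ij})_j$; $ars(M)=(i+\sum_j M_{ij})_{i=1..m}$; $acs(M)=(j+\sum_i M_{ij})_{j=1..n}$. $PC(A,B)$ means $\{acs(A)_1,\dots,acs(A)_n,ars(B)_1,\dots,ars(B)_m\}=\{1,\dots,m+n\}$. A syl-representation of $\alpha^\mu\beta^\nu$ is a pair $(\mathcal{S}_1,\mathcal{S}_2)$ in $\{0,1\}^{m\times n}$ with $rs(\mathcal{S}_1)=\mu$, $cs(\mathcal{S}_2)=\nu$, $PC(\mathcal{S}_1,\mathcal{S}_2)$. $M$ is bottom-left flushed if whenever $M_{ij}=1$, also $M_{i'j'}=1$ for all $i'\ge i$, $j'\le j$. A pair $(A,B)$ is sorted if $acs(A)$ and $ars(B)$ are strictly increasing, flushed if $B$ is bottom-left flushed, sorted-flushed if both. *)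

theory Defs
  imports Main
begin

text \<open>Matrices in {0,1}^(m x n) are functions nat => nat => nat, indexed 1-based
 (rows 1..m, columns 1..n), with entries in {0,1} on that range.\<close>

definition is01 :: "nat \<Rightarrow> nat \<Rightarrow> (nat \<Rightarrow> nat \<Rightarrow> nat) \<Rightarrow> bool" where
  "is01 m n M \<longleftrightarrow> (\<forall>i\<in>{1..m}. \<forall>j\<in>{1..n}. M i j \<in> {0,1})"

definition rs :: "nat \<Rightarrow> (nat \<Rightarrow> nat \<Rightarrow> nat) \<Rightarrow> nat \<Rightarrow> nat" where
  "rs n M i = (\<Sum>j=1..n. M i j)"

definition cs :: "nat \<Rightarrow> (nat \<Rightarrow> nat \<Rightarrow> nat) \<Rightarrow> nat \<Rightarrow> nat" where
  "cs m M j = (\<Sum>i=1..m. M i j)"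

definition ars :: "nat \<Rightarrow> (nat \<Rightarrow> nat \<Rightarrow> nat) \<Rightarrow> nat \<Rightarrow> nat" where
  "ars n M i = i + rs n M i"

definition acs :: "nat \<Rightarrow> (nat \<Rightarrow> nat \<Rightarrow> nat) \<Rightarrow> nat \<Rightarrow> nat" where
  "acs m M j = j + cs m M j"

definition PC :: "nat \<Rightarrow> nat \<Rightarrow> (nat \<Rightarrow> nat \<Rightarrow> nat) \<Rightarrow> (nat \<Rightarrow> nat \<Rightarrow> nat) \<Rightarrow> bool" where
  "PC m n A B \<longleftrightarrow> acs m A ` {1..n} \<union> ars n B ` {1..m} = {1..m+n}"

definition syl_rep :: "nat \<Rightarrow> nat \<Rightarrow> (nat \<Rightarrow> nat) \<Rightarrow> (nat \<Rightarrow> nat)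
    \<Rightarrow> (nat \<Rightarrow> nat \<Rightarrow> nat) \<Rightarrow> (nat \<Rightarrow> nat \<Rightarrow> nat) \<Rightarrow> bool" where
  "syl_rep m n \<mu> \<nu> S1 S2 \<longleftrightarrow> is01 m n S1 \<and> is01 m n S2
     \<and> (\<forall>i\<in>{1..m}. rs n S1 i = \<mu> i) \<and> (\<forall>j\<in>{1..n}. cs m S2 j = \<nu> j)
     \<and> PC m n S1 S2"

definition bl_flushed :: "nat \<Rightarrow> nat \<Rightarrow> (nat \<Rightarrow> nat \<Rightarrow> nat) \<Rightarrow> bool" where
  "bl_flushed m n M \<longleftrightarrow> (\<forall>i\<in>{1..m}. \<forall>j\<in>{1..n}. M i j = 1 \<longrightarrow>
     (\<forall>i'\<in>{i..m}. \<forall>j'\<in>{1..j}. M i' j' = 1))"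

definition sorted_pair :: "nat \<Rightarrow> nat \<Rightarrow> (nat \<Rightarrow> nat \<Rightarrow> nat) \<Rightarrow> (nat \<Rightarrow> nat \<Rightarrow> nat) \<Rightarrow> bool" where
  "sorted_pair m n A B \<longleftrightarrow> strict_mono_on {1..n} (acs m A) \<and> strict_mono_on {1..m} (ars n B)"

definition flushed_pair :: "nat \<Rightarrow> nat \<Rightarrow> (nat \<Rightarrow> nat \<Rightarrow> nat) \<Rightarrow> (nat \<Rightarrow> nat \<Rightarrow> nat) \<Rightarrow> bool" where
  "flushed_pair m n A B \<longleftrightarrow> bl_flushed m n B"

end

theory Submission
  imports Defs
begin

(* For a sorted pair (A, B) with the PC property, acs(A)_j exceeds exactly cs(A)_j of the values
   ars(B)_i and ars(B)_i exceeds exactly rs(B)_i of the values acs(A)_j.  Counting with this shows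
   that the first k column sums of the 0/1-complement X of A add up to \<Sum>_i min(rs(B)_i, k), which
   dominates the first k column sums of B, i.e. of \<nu>, with equality for k = n.  Under this
   majorization, repeatedly moving a one of X to the right within its row produces a 0/1-matrix Y
   with the row sums of X and column sums \<nu>.  The complement of Y has row sums \<mu> and column sums
   m - \<nu>_j; it is paired with the staircase matrix whose j-th column has \<nu>_j ones at the bottom,
   which is bottom-left flushed.  As \<nu> is non-increasing, j + m - \<nu>_j and i + #{j. \<nu>_j > m - i}
   are increasing and partition {1..m+n} (conjugate partitions), so the new pair is sorted and PC. *)

section \<open>Two increasing maps partitioning an interval\<close>

lemma image_partition_disjoint:
  fixes f g :: "nat \<Rightarrow> nat"
  assumes "f ` {1..p} \<union> g ` {1..q} = {1..p+q}"
  shows "f ` {1..p} \<inter> g ` {1..q} = {}"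
proof -
  have "card (f ` {1..p}) \<le> p" "card (g ` {1..q}) \<le> q"
    using card_image_le[of "{1..p}" f] card_image_le[of "{1..q}" g] by simp_all
  moreover have "card (f ` {1..p} \<union> g ` {1..q}) + card (f ` {1..p} \<inter> g ` {1..q})
      = card (f ` {1..p}) + card (g ` {1..q})"
    using card_Un_Int[of "f ` {1..p}" "g ` {1..q}"] by simp
  moreover have "card (f ` {1..p} \<union> g ` {1..q}) = p + q" using assms by simp
  ultimately have "card (f ` {1..p} \<inter> g ` {1..q}) = 0" by linarith
  then show ?thesis by (simp add: card_eq_0_iff)
qed

lemma image_partition_of_disjoint:
  fixes f g :: "nat \<Rightarrow> nat"
  assumes "inj_on f {1..p}" "inj_on g {1..q}"
    and "f ` {1..p} \<subseteq> {1..p+q}" "g ` {1..q} \<subseteq> {1..p+q}"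
    and "f ` {1..p} \<inter> g ` {1..q} = {}"
  shows "f ` {1..p} \<union> g ` {1..q} = {1..p+q}"
proof (rule card_subset_eq)
  show "f ` {1..p} \<union> g ` {1..q} \<subseteq> {1..p+q}" using assms(3,4) by blast
  have "card (f ` {1..p} \<union> g ` {1..q}) = card (f ` {1..p}) + card (g ` {1..q})"
    using assms(5) by (intro card_Un_disjoint) auto
  then show "card (f ` {1..p} \<union> g ` {1..q}) = card {1..p+q}"
    using card_image[OF assms(1)] card_image[OF assms(2)] by simp
qed simp

lemma image_partition_count:
  fixes f g :: "nat \<Rightarrow> nat"
  assumes sf: "strict_mono_on {1..p} f" and sg: "strict_mono_on {1..q} g"
    and U: "f ` {1..p} \<union> g ` {1..q} = {1..p+q}" and x: "x \<in> {1..p}"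
  shows "f x = x + card {y\<in>{1..q}. g y < f x}"
proof -
  have fx: "f x \<in> {1..p+q}" using U x by blast
  have "{1..<f x} = f ` {1..<x} \<union> g ` {y\<in>{1..q}. g y < f x}"
  proof (intro equalityI subsetI)
    fix z assume z: "z \<in> {1..<f x}"
    then have "z \<in> f ` {1..p} \<union> g ` {1..q}" using U fx by auto
    moreover have "x' < x" if "x' \<in> {1..p}" "z = f x'" for x'
      using strict_mono_on_less[OF sf that(1) x] z that(2) by auto
    ultimately show "z \<in> f ` {1..<x} \<union> g ` {y\<in>{1..q}. g y < f x}"
      using z by fastforce
  next
    fix z assume "z \<in> f ` {1..<x} \<union> g ` {y\<in>{1..q}. g y < f x}"
    moreover have "f x' < f x" if "x' \<in> {1..<x}" for x'
      using strict_mono_on_less[OF sf _ x] that x by auto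
    moreover have "f ` {1..p} \<union> g ` {1..q} \<subseteq> {1..p+q}" using U by simp
    ultimately show "z \<in> {1..<f x}" using x by fastforce
  qed
  moreover have "inj_on f {1..<x}"
    using strict_mono_on_imp_inj_on[OF sf] x by (auto intro: inj_on_subset)
  moreover have "inj_on g {y\<in>{1..q}. g y < f x}"
    using strict_mono_on_imp_inj_on[OF sg] by (rule inj_on_subset) auto
  moreover have "f ` {1..<x} \<inter> g ` {y\<in>{1..q}. g y < f x} = {}"
    using image_partition_disjoint[OF U] x by fastforce
  ultimately have "card {1..<f x} = (x - 1) + card {y\<in>{1..q}. g y < f x}"
    by (simp add: card_Un_disjoint card_image)
  then show ?thesis using fx x by auto
qed

section \<open>Column sums of a sorted pair with the PC property\<close>

definition complement01 :: "(nat \<Rightarrow> nat \<Rightarrow> nat) \<Rightarrow> nat \<Rightarrow> nat \<Rightarrow> nat" where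
  "complement01 M i j = 1 - M i j"

definition prefix_sum :: "(nat \<Rightarrow> nat) \<Rightarrow> nat \<Rightarrow> nat" where
  "prefix_sum f k = (\<Sum>j=1..k. f j)"

lemma prefix_sum_Suc: "prefix_sum f (Suc k) = prefix_sum f k + f (Suc k)"
  unfolding prefix_sum_def by simp

lemma card_filter_eq_sum_of_bool: "finite S \<Longrightarrow> card {x\<in>S. P x} = (\<Sum>x\<in>S. of_bool (P x))"
  by (simp add: Int_def)

lemma is01_le_1: "is01 m n M \<Longrightarrow> i \<in> {1..m} \<Longrightarrow> j \<in> {1..n} \<Longrightarrow> M i j \<le> 1"
  unfolding is01_def by fastforce

lemma rs_le: "is01 m n M \<Longrightarrow> i \<in> {1..m} \<Longrightarrow> rs n M i \<le> n"
  using sum_mono[of "{1..n}" "M i" "\<lambda>_. 1"] is01_le_1[of m n M i] unfolding rs_def by simp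

lemma cs_le: "is01 m n M \<Longrightarrow> j \<in> {1..n} \<Longrightarrow> cs m M j \<le> m"
  using sum_mono[of "{1..m}" "\<lambda>i. M i j" "\<lambda>_. 1"] is01_le_1[of m n M _ j] unfolding cs_def by simp

lemma is01_complement01: "is01 m n M \<Longrightarrow> is01 m n (complement01 M)"
  unfolding is01_def complement01_def by auto

lemma rs_complement01: "is01 m n M \<Longrightarrow> i \<in> {1..m} \<Longrightarrow> rs n (complement01 M) i = n - rs n M i"
  unfolding rs_def complement01_def using is01_le_1[of m n M i] by (subst sum_subtractf_nat) auto

lemma cs_complement01: "is01 m n M \<Longrightarrow> j \<in> {1..n} \<Longrightarrow> cs m (complement01 M) j = m - cs m M j"
  unfolding cs_def complement01_def using is01_le_1[of m n M _ j] by (subst sum_subtractf_nat) auto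

lemma prefix_sum_cs: "prefix_sum (cs m M) k = (\<Sum>i=1..m. \<Sum>j=1..k. M i j)"
  unfolding prefix_sum_def cs_def by (rule sum.swap)

lemma prefix_sum_cs_le_sum_min_rs:
  assumes "is01 m n M" "k \<le> n"
  shows "prefix_sum (cs m M) k \<le> (\<Sum>i=1..m. min (rs n M i) k)"
proof -
  have "(\<Sum>j=1..k. M i j) \<le> min (rs n M i) k" if "i \<in> {1..m}" for i
  proof -
    have "(\<Sum>j=1..k. M i j) \<le> (\<Sum>j=1..k. 1)"
      using assms is01_le_1[OF assms(1) that] by (intro sum_mono) auto
    moreover have "(\<Sum>j=1..k. M i j) \<le> rs n M i"
      unfolding rs_def using assms(2) by (intro sum_mono2) auto
    ultimately show ?thesis by simp
  qed
  then show ?thesis unfolding prefix_sum_cs by (intro sum_mono) auto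
qed

lemma prefix_sum_cs_total: "is01 m n M \<Longrightarrow> prefix_sum (cs m M) n = (\<Sum>i=1..m. min (rs n M i) n)"
  unfolding prefix_sum_cs using rs_le[of m n M] by (intro sum.cong) (auto simp: rs_def)

lemma card_above_plus_min_card_below:
  fixes f :: "nat \<Rightarrow> nat"
  assumes sf: "strict_mono_on {1..n} f" and v: "v \<notin> f ` {1..n}" and k: "k \<le> n"
  shows "card {j\<in>{1..k}. v < f j} + min (card {j\<in>{1..n}. f j < v}) k = k"
proof -
  define T where "T = {j\<in>{1..n}. f j < v}"
  have "{j\<in>{1..k}. v < f j} = {1..k} - T"
    unfolding T_def using k v by force
  then have above: "card {j\<in>{1..k}. v < f j} = k - card ({1..k} \<inter> T)"
    by (simp add: card_Diff_subset_Int)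
  have "card ({1..k} \<inter> T) = min (card T) k"
  proof (cases "T \<subseteq> {1..k}")
    case True
    then show ?thesis using card_mono[OF _ True] by (simp add: Int_absorb1)
  next
    case False
    then obtain j where j: "j \<in> {1..n}" "k < j" "f j < v" unfolding T_def by fastforce
    have "{1..k} \<subseteq> T"
    proof
      fix j' assume j': "j' \<in> {1..k}"
      then have "f j' < f j" using strict_mono_on_less[OF sf _ j(1)] j k by auto
      then show "j' \<in> T" using j j' k unfolding T_def by auto
    qed
    then show ?thesis using card_mono[of T "{1..k}"] unfolding T_def by (simp add: Int_absorb2)
  qed
  then show ?thesis using above unfolding T_def by simp
qed

lemma sorted_PC_prefix_sum_cs:
  assumes sA: "strict_mono_on {1..n} (acs m A)" and sB: "strict_mono_on {1..m} (ars n B)"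
    and PC: "PC m n A B" and k: "k \<le> n"
  shows "prefix_sum (cs m A) k + (\<Sum>i=1..m. min (rs n B i) k) = k * m"
proof -
  have U: "acs m A ` {1..n} \<union> ars n B ` {1..m} = {1..n+m}"
    using PC unfolding PC_def by (simp add: add.commute)
  have cA: "cs m A j = (\<Sum>i=1..m. of_bool (ars n B i < acs m A j))" if "j \<in> {1..n}" for j
    using image_partition_count[OF sA sB U that]
    unfolding card_filter_eq_sum_of_bool[OF finite_atLeastAtMost] acs_def by simp
  have rB: "rs n B i = card {j\<in>{1..n}. acs m A j < ars n B i}" if "i \<in> {1..m}" for i
    using image_partition_count[OF sB sA _ that] U by (simp add: ars_def Un_commute add.commute)
  have "prefix_sum (cs m A) k = (\<Sum>j=1..k. \<Sum>i=1..m. of_bool (ars n B i < acs m A j))"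
    unfolding prefix_sum_def using k by (intro sum.cong) (auto simp: cA)
  also have "\<dots> = (\<Sum>i=1..m. card {j\<in>{1..k}. ars n B i < acs m A j})"
    by (subst sum.swap) (simp add: Int_def)
  finally have "prefix_sum (cs m A) k + (\<Sum>i=1..m. min (rs n B i) k)
      = (\<Sum>i=1..m. card {j\<in>{1..k}. ars n B i < acs m A j} + min (rs n B i) k)"
    by (simp add: sum.distrib)
  also have "\<dots> = (\<Sum>i=1..m. k)"
  proof (rule sum.cong[OF refl])
    fix i assume i: "i \<in> {1..m}"
    have "ars n B i \<notin> acs m A ` {1..n}" using image_partition_disjoint[OF U] i by blast
    then show "card {j\<in>{1..k}. ars n B i < acs m A j} + min (rs n B i) k = k"
      using card_above_plus_min_card_below[OF sA _ k] rB[OF i] by simp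
  qed
  finally show ?thesis by simp
qed

lemma prefix_sum_cs_complement01:
  assumes "is01 m n A" "strict_mono_on {1..n} (acs m A)" "strict_mono_on {1..m} (ars n B)"
    and "PC m n A B" "k \<le> n"
  shows "prefix_sum (cs m (complement01 A)) k = (\<Sum>i=1..m. min (rs n B i) k)"
proof -
  have "prefix_sum (cs m (complement01 A)) k = (\<Sum>j=1..k. m - cs m A j)"
    unfolding prefix_sum_def using assms(1,5) cs_complement01 by (intro sum.cong) auto
  also have "\<dots> = k * m - prefix_sum (cs m A) k"
    unfolding prefix_sum_def using assms(1,5) cs_le by (subst sum_subtractf_nat) auto
  also have "\<dots> = (\<Sum>i=1..m. min (rs n B i) k)"
    using sorted_PC_prefix_sum_cs[OF assms(2-5)] by simp
  finally show ?thesis .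
qed

section \<open>Realizing majorized column sums\<close>

lemma majorization_exchange_columns:
  fixes c q :: "nat \<Rightarrow> nat"
  assumes q_antimono: "\<forall>j\<in>{1..n}. \<forall>j'\<in>{1..n}. j \<le> j' \<longrightarrow> q j' \<le> q j"
    and dom: "\<forall>k\<le>n. prefix_sum q k \<le> prefix_sum c k"
    and tot: "prefix_sum q n = prefix_sum c n"
    and ne: "\<exists>j\<in>{1..n}. c j \<noteq> q j"
  obtains j0 l where "j0 \<in> {1..n}" "l \<in> {1..n}" "j0 < l" "c l < c j0"
    and "\<And>k. j0 \<le> k \<Longrightarrow> k < l \<Longrightarrow> prefix_sum q k < prefix_sum c k"
proof -
  define j0 where "j0 = (LEAST j. j \<in> {1..n} \<and> c j \<noteq> q j)"
  have "j0 \<in> {1..n} \<and> c j0 \<noteq> q j0"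
    unfolding j0_def by (rule LeastI_ex) (use ne in blast)
  then have j0: "j0 \<in> {1..n}" "c j0 \<noteq> q j0" by auto
  have "prefix_sum c (j0 - 1) = prefix_sum q (j0 - 1)"
    unfolding prefix_sum_def
    using not_less_Least[of _ "\<lambda>j. j \<in> {1..n} \<and> c j \<noteq> q j"] j0 unfolding j0_def[symmetric]
    by (intro sum.cong) auto
  moreover have "prefix_sum c j0 = prefix_sum c (j0 - 1) + c j0"
    and "prefix_sum q j0 = prefix_sum q (j0 - 1) + q j0"
    using prefix_sum_Suc[of c "j0 - 1"] prefix_sum_Suc[of q "j0 - 1"] j0(1) by simp_all
  moreover have "prefix_sum q j0 \<le> prefix_sum c j0" using dom j0(1) by simp
  ultimately have q_less_c_j0: "q j0 < c j0" and gap_j0: "prefix_sum q j0 < prefix_sum c j0"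
    using j0(2) by linarith+
  define l where "l = (LEAST l. j0 \<le> l \<and> l \<le> n \<and> prefix_sum c l = prefix_sum q l)"
  have "j0 \<le> l \<and> l \<le> n \<and> prefix_sum c l = prefix_sum q l"
    unfolding l_def by (rule LeastI[of _ n]) (use j0 tot in auto)
  then have l: "j0 \<le> l" "l \<le> n" "prefix_sum c l = prefix_sum q l" by auto
  have gap: "prefix_sum q k < prefix_sum c k" if "j0 \<le> k" "k < l" for k
  proof -
    have "prefix_sum c k \<noteq> prefix_sum q k"
      using not_less_Least[of k "\<lambda>l. j0 \<le> l \<and> l \<le> n \<and> prefix_sum c l = prefix_sum q l"]
        that l unfolding l_def[symmetric] by auto
    moreover have "prefix_sum q k \<le> prefix_sum c k" using dom that l by auto
    ultimately show ?thesis by simp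
  qed
  have "j0 < l" using l gap_j0 by (cases "j0 = l") auto
  then have "prefix_sum q (l - 1) < prefix_sum c (l - 1)" using gap by simp
  moreover have "prefix_sum c l = prefix_sum c (l - 1) + c l"
    and "prefix_sum q l = prefix_sum q (l - 1) + q l"
    using prefix_sum_Suc[of c "l - 1"] prefix_sum_Suc[of q "l - 1"] \<open>j0 < l\<close> by simp_all
  ultimately have "c l < q l" using l(3) by linarith
  moreover have "q l \<le> q j0" using q_antimono j0(1) l \<open>j0 < l\<close> by auto
  ultimately show thesis
    using that[OF j0(1) _ \<open>j0 < l\<close> _ gap] j0 l q_less_c_j0 by auto
qed

lemma exists_row_one_zero:
  assumes "is01 m n X" "j \<in> {1..n}" "l \<in> {1..n}" "cs m X l < cs m X j"
  shows "\<exists>i\<in>{1..m}. X i j = 1 \<and> X i l = 0"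
proof (rule ccontr)
  assume "\<not> ?thesis"
  then have "\<forall>i\<in>{1..m}. X i j \<le> X i l" using assms(1-3) unfolding is01_def by fastforce
  then have "cs m X j \<le> cs m X l" unfolding cs_def by (intro sum_mono) auto
  with assms(4) show False by simp
qed

lemma move_one_in_row:
  assumes X: "is01 m n X" and i: "i \<in> {1..m}" and j0: "j0 \<in> {1..n}" and l: "l \<in> {1..n}"
    and "j0 \<noteq> l" "X i j0 = 1" "X i l = 0"
  defines "X' \<equiv> X(i := (X i)(j0 := 0, l := 1))"
  shows "is01 m n X'" and "rs n X' = rs n X"
    and "k \<le> n \<Longrightarrow> prefix_sum (cs m X') k + of_bool (j0 \<le> k)
                     = prefix_sum (cs m X) k + of_bool (l \<le> k)"
proof -
  have entry: "X' i' j + of_bool (i' = i \<and> j = j0) = X i' j + of_bool (i' = i \<and> j = l)" for i' j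
    using assms(5-7) unfolding X'_def by auto
  show "is01 m n X'" using X unfolding X'_def is01_def by auto
  show "rs n X' = rs n X"
  proof
    fix i'
    have "(\<Sum>j=1..n. X' i' j + of_bool (i' = i \<and> j = j0)) = (\<Sum>j=1..n. X i' j + of_bool (i' = i \<and> j = l))"
      using entry by simp
    moreover have "(\<Sum>j=1..n. of_bool (i' = i \<and> j = j') :: nat) = of_bool (i' = i)" if "j' \<in> {1..n}" for j'
      using that by (cases "i' = i") (simp_all add: of_bool_def)
    ultimately show "rs n X' i' = rs n X i'" using j0 l unfolding rs_def sum.distrib by simp
  qed
  assume k: "k \<le> n"
  have "(\<Sum>j=1..k. \<Sum>i'=1..m. X' i' j + of_bool (i' = i \<and> j = j0))
      = (\<Sum>j=1..k. \<Sum>i'=1..m. X i' j + of_bool (i' = i \<and> j = l))"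
    using entry by simp
  moreover have "(\<Sum>j=1..k. \<Sum>i'=1..m. of_bool (i' = i \<and> j = j') :: nat) = of_bool (j' \<le> k)"
    if "j' \<in> {1..n}" for j'
  proof -
    have "(\<Sum>i'=1..m. of_bool (i' = i \<and> j = j') :: nat) = of_bool (j = j')" for j
      using i by (cases "j = j'") (simp_all add: of_bool_def)
    then show ?thesis using that by (simp add: of_bool_def)
  qed
  ultimately show "prefix_sum (cs m X') k + of_bool (j0 \<le> k) = prefix_sum (cs m X) k + of_bool (l \<le> k)"
    using j0 l unfolding prefix_sum_def cs_def sum.distrib by simp
qed

lemma is01_with_column_sums_of_majorization:
  fixes q :: "nat \<Rightarrow> nat"
  assumes q_antimono: "\<forall>j\<in>{1..n}. \<forall>j'\<in>{1..n}. j \<le> j' \<longrightarrow> q j' \<le> q j"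
    and "is01 m n X"
    and "\<forall>k\<le>n. prefix_sum q k \<le> prefix_sum (cs m X) k"
    and "prefix_sum q n = prefix_sum (cs m X) n"
  shows "\<exists>Y. is01 m n Y \<and> rs n Y = rs n X \<and> (\<forall>j\<in>{1..n}. cs m Y j = q j)"
  using assms(2-4)
proof (induction "\<Sum>k=1..n. prefix_sum (cs m X) k" arbitrary: X rule: less_induct)
  case less
  show ?case
  proof (cases "\<forall>j\<in>{1..n}. cs m X j = q j")
    case True
    with less.prems(1) show ?thesis by blast
  next
    case False
    then obtain j0 l where j0: "j0 \<in> {1..n}" and l: "l \<in> {1..n}" and "j0 < l"
      and "cs m X l < cs m X j0"
      and gap: "\<And>k. j0 \<le> k \<Longrightarrow> k < l \<Longrightarrow> prefix_sum q k < prefix_sum (cs m X) k"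
      using majorization_exchange_columns[OF q_antimono less.prems(2,3)] by blast
    then obtain i where i: "i \<in> {1..m}" "X i j0 = 1" "X i l = 0"
      using exists_row_one_zero[OF less.prems(1) j0 l] by blast
    define X' where "X' = X(i := (X i)(j0 := 0, l := 1))"
    have "j0 \<noteq> l" using \<open>j0 < l\<close> by simp
    note moved = move_one_in_row[OF less.prems(1) i(1) j0 l this i(2,3), folded X'_def]
    have shift: "prefix_sum (cs m X') k + of_bool (j0 \<le> k \<and> k < l) = prefix_sum (cs m X) k"
      if "k \<le> n" for k
      using moved(3)[OF that] \<open>j0 < l\<close> by (cases "j0 \<le> k"; cases "l \<le> k") auto
    have "\<forall>k\<le>n. prefix_sum q k \<le> prefix_sum (cs m X') k"
    proof (intro allI impI)
      fix k assume "k \<le> n"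
      then show "prefix_sum q k \<le> prefix_sum (cs m X') k"
        using shift[of k] gap[of k] less.prems(2) by (cases "j0 \<le> k \<and> k < l") auto
    qed
    moreover have "prefix_sum q n = prefix_sum (cs m X') n"
      using shift[of n] l less.prems(3) by simp
    moreover have "(\<Sum>k=1..n. prefix_sum (cs m X') k) < (\<Sum>k=1..n. prefix_sum (cs m X) k)"
    proof (rule sum_strict_mono_ex1)
      show "\<forall>k\<in>{1..n}. prefix_sum (cs m X') k \<le> prefix_sum (cs m X) k"
        using shift by (metis atLeastAtMost_iff le_add1)
      show "\<exists>k\<in>{1..n}. prefix_sum (cs m X') k < prefix_sum (cs m X) k"
        using shift[of j0] j0 \<open>j0 < l\<close> by force
    qed simp
    ultimately show ?thesis using less.hyps moved(1,2) by metis
  qed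
qed

section \<open>The staircase matrix\<close>

definition staircase :: "nat \<Rightarrow> (nat \<Rightarrow> nat) \<Rightarrow> nat \<Rightarrow> nat \<Rightarrow> nat" where
  "staircase m \<nu> i j = of_bool (m < i + \<nu> j)"

lemma is01_staircase: "is01 m n (staircase m \<nu>)"
  unfolding is01_def staircase_def by simp

lemma cs_staircase: "\<nu> j \<le> m \<Longrightarrow> cs m (staircase m \<nu>) j = \<nu> j"
proof -
  assume "\<nu> j \<le> m"
  then have "{i\<in>{1..m}. m < i + \<nu> j} = {Suc (m - \<nu> j)..m}" by auto
  then show ?thesis
    using \<open>\<nu> j \<le> m\<close> card_filter_eq_sum_of_bool[of "{1..m}" "\<lambda>i. m < i + \<nu> j"]
    unfolding cs_def staircase_def by simp
qed

lemma rs_staircase: "rs n (staircase m \<nu>) i = card {j\<in>{1..n}. m < i + \<nu> j}"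
  unfolding rs_def staircase_def card_filter_eq_sum_of_bool[OF finite_atLeastAtMost] ..

lemma bl_flushed_staircase:
  assumes "\<forall>j\<in>{1..n}. \<forall>j'\<in>{1..n}. j \<le> j' \<longrightarrow> \<nu> j' \<le> \<nu> j"
  shows "bl_flushed m n (staircase m \<nu>)"
  unfolding bl_flushed_def staircase_def
proof (intro ballI impI)
  fix i j i' j' assume "j \<in> {1..n}" "of_bool (m < i + \<nu> j) = (1::nat)" "i' \<in> {i..m}" "j' \<in> {1..j}"
  moreover from this have "\<nu> j \<le> \<nu> j'" using assms by auto
  moreover have "m < i + \<nu> j" using \<open>of_bool (m < i + \<nu> j) = 1\<close> by (cases "m < i + \<nu> j") auto
  ultimately show "of_bool (m < i' + \<nu> j') = (1::nat)" by auto
qed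

lemma conjugate_partition_disjoint:
  assumes nu_antimono: "\<forall>j\<in>{1..n}. \<forall>j'\<in>{1..n}. j \<le> j' \<longrightarrow> \<nu> j' \<le> \<nu> j"
    and j: "j \<in> {1..n}" and i: "1 \<le> i"
  shows "j + (m - \<nu> j) \<noteq> i + card {j'\<in>{1..n}. m < i + \<nu> j'}"
proof -
  define S where "S = {j'\<in>{1..n}. m < i + \<nu> j'}"
  have "j + (m - \<nu> j) \<noteq> i + card S"
  proof (cases "j \<in> S")
    case True
    then have "{1..j} \<subseteq> S" using nu_antimono j unfolding S_def by fastforce
    then have "j \<le> card S" using card_mono[of S "{1..j}"] unfolding S_def by simp
    moreover have "m < i + \<nu> j" using True unfolding S_def by simp
    ultimately show ?thesis using i by arith
  next
    case False
    then have "S \<subseteq> {1..<j}" using nu_antimono j unfolding S_def by (fastforce simp: not_less)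
    then have "card S \<le> j - 1" using card_mono[of "{1..<j}" S] by simp
    moreover have "i \<le> m - \<nu> j" using False j unfolding S_def by auto
    moreover have "1 \<le> j" using j by simp
    ultimately show ?thesis by arith
  qed
  then show ?thesis unfolding S_def .
qed

lemma sorted_PC_staircase:
  assumes nu_le: "\<forall>j\<in>{1..n}. \<nu> j \<le> m"
    and nu_antimono: "\<forall>j\<in>{1..n}. \<forall>j'\<in>{1..n}. j \<le> j' \<longrightarrow> \<nu> j' \<le> \<nu> j"
    and cs_A: "\<forall>j\<in>{1..n}. cs m A j = m - \<nu> j"
  shows "sorted_pair m n A (staircase m \<nu>)" and "PC m n A (staircase m \<nu>)"
proof -
  define R where "R i = card {j\<in>{1..n}. m < i + \<nu> j}" for i
  have acs_A: "acs m A j = j + (m - \<nu> j)" if "j \<in> {1..n}" for j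
    using cs_A that unfolding acs_def by simp
  have ars_B: "ars n (staircase m \<nu>) i = i + R i" for i
    unfolding ars_def rs_staircase R_def ..
  have R_le: "R i \<le> n" for i
    using card_mono[of "{1..n}" "{j\<in>{1..n}. m < i + \<nu> j}"] unfolding R_def by fastforce
  have sA: "strict_mono_on {1..n} (acs m A)"
  proof (rule strict_mono_onI)
    fix j j' assume "j \<in> {1..n}" "j' \<in> {1..n}" "j < j'"
    then show "acs m A j < acs m A j'" using acs_A nu_le nu_antimono by fastforce
  qed
  have sB: "strict_mono_on {1..m} (ars n (staircase m \<nu>))"
  proof (rule strict_mono_onI)
    fix i i' assume "i \<in> {1..m}" "i' \<in> {1..m}" "i < i'"
    moreover have "R i \<le> R i'" unfolding R_def using \<open>i < i'\<close> by (intro card_mono) auto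
    ultimately show "ars n (staircase m \<nu>) i < ars n (staircase m \<nu>) i'" using ars_B by simp
  qed
  then show "sorted_pair m n A (staircase m \<nu>)" using sA unfolding sorted_pair_def by simp
  have "acs m A ` {1..n} \<inter> ars n (staircase m \<nu>) ` {1..m} = {}"
    using conjugate_partition_disjoint[OF nu_antimono] acs_A unfolding ars_B R_def by fastforce
  moreover have "acs m A ` {1..n} \<subseteq> {1..n+m}" using acs_A by auto
  moreover have "ars n (staircase m \<nu>) ` {1..m} \<subseteq> {1..n+m}"
    unfolding image_subset_iff ars_B
  proof
    fix i assume "i \<in> {1..m}"
    then show "i + R i \<in> {1..n+m}" using R_le[of i] by simp
  qed
  ultimately show "PC m n A (staircase m \<nu>)" unfolding PC_def
    using image_partition_of_disjoint[OF strict_mono_on_imp_inj_on[OF sA] strict_mono_on_imp_inj_on[OF sB]]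
    by (simp add: add.commute)
qed

theorem mainTheorem8:
  fixes m n :: nat and \<mu> \<nu> :: "nat \<Rightarrow> nat"
  assumes "\<forall>j\<in>{1..n}. \<nu> j \<le> m"
    and "\<forall>j\<in>{1..n}. \<forall>j'\<in>{1..n}. j \<le> j' \<longrightarrow> \<nu> j' \<le> \<nu> j"
    and "\<exists>A B. syl_rep m n \<mu> \<nu> A B \<and> sorted_pair m n A B"
  shows "\<exists>A B. syl_rep m n \<mu> \<nu> A B \<and> sorted_pair m n A B \<and> flushed_pair m n A B"
proof -
  obtain A B where "syl_rep m n \<mu> \<nu> A B" "sorted_pair m n A B" using assms(3) by blast
  then have A: "is01 m n A" "\<forall>i\<in>{1..m}. rs n A i = \<mu> i" and B: "is01 m n B" "\<forall>j\<in>{1..n}. cs m B j = \<nu> j"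
    and sorted: "strict_mono_on {1..n} (acs m A)" "strict_mono_on {1..m} (ars n B)" and "PC m n A B"
    unfolding syl_rep_def sorted_pair_def by auto
  have prefix_sum_\<nu>: "prefix_sum \<nu> k = prefix_sum (cs m B) k" if "k \<le> n" for k
    using B(2) that unfolding prefix_sum_def by (intro sum.cong) auto
  note prefix_sum_X = prefix_sum_cs_complement01[OF A(1) sorted \<open>PC m n A B\<close>]
  have "\<forall>k\<le>n. prefix_sum \<nu> k \<le> prefix_sum (cs m (complement01 A)) k"
    using prefix_sum_cs_le_sum_min_rs[OF B(1)] by (simp add: prefix_sum_\<nu> prefix_sum_X)
  moreover have "prefix_sum \<nu> n = prefix_sum (cs m (complement01 A)) n"
    using prefix_sum_cs_total[OF B(1)] by (simp add: prefix_sum_\<nu> prefix_sum_X)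
  ultimately obtain Y where Y: "is01 m n Y" "rs n Y = rs n (complement01 A)" "\<forall>j\<in>{1..n}. cs m Y j = \<nu> j"
    using is01_with_column_sums_of_majorization[OF assms(2) is01_complement01[OF A(1)]] by blast
  have rs_Y': "\<forall>i\<in>{1..m}. rs n (complement01 Y) i = \<mu> i"
    using A rs_complement01[OF Y(1)] rs_complement01[OF A(1)] rs_le[OF A(1)] Y(2) by simp
  have cs_Y': "\<forall>j\<in>{1..n}. cs m (complement01 Y) j = m - \<nu> j"
    using cs_complement01[OF Y(1)] Y(3) by simp
  show ?thesis
    unfolding syl_rep_def flushed_pair_def
    using is01_complement01[OF Y(1)] rs_Y' is01_staircase cs_staircase assms(1)
      sorted_PC_staircase[OF assms(1,2) cs_Y'] bl_flushed_staircase[OF assms(2)] by blast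
qed

end
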